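(* Let $n=n_1+\dots+n_k+\tilde n$ with $n_i\ge1$, $\tilde n\ge 0$, and let $M$ be the corresponding standard Levi subgroup of $\mathrm{SO}_{2n+1}(F)$, identified with $\mathrm{GL}_{n_1}(F)\times\cdots\times\mathrm{GL}_{n_k}(F)\times\mathrm{SO}_{2\tilde n+1}(F)$. Then $M\cap\mathrm{J}^+=\mathrm{GL}_{n_1}(\mathcal{O})\times\cdots\times\mathrm{GL}_{n_k}(\mathcal{O})\times\mathrm{J}^+_{2\tilde n+1}$, where $\mathrm{J}^+_{2\tilde n+1}$ is the paramodular subgroup of $\mathrm{SO}_{2\tilde n+1}(F)$.
   Context: $F$ non-archimedean local field of characteristic $0$, ring of integers $\mathcal{O}$, $\mathfrak{p}=\varpi\mathcal{O}$, residue field $k$. $V_n$ has basis $\mathcal{B}_0=(e_1,\dots,e_n,v_0,f_n,\dots,f_1)$ with $\langle e_i,f_j\rangle=\delta_{ij}$, $\langle v_0,v_0\rangle=2$, other pairings $0$, $q(x)=\langle x,x\rangle/2$, $\mathrm{SO}_{2n+1}(F)=\mathrm{SO}(V_n,q)$. The Levi $M$ consists of elements whose matrix in $\mathcal{B}_0$ is block diagonal $\mathrm{diag}(C_1,\dots,C_k,D,{}^\tau C_k^{-1},\dots,{}^\tau C_1^{-1})$ with $C_i\in\mathrm{GL}_{n_i}(F)$, ${}^\tau$ the transpose with respect to the antidiagonal, and $D\in\mathrm{SO}(V_{\tilde n})$ where $V_{\tilde n}$ is spanned by $e_{n'+1},\dots,e_n,v_0,f_n,\dots,f_{n'+1}$,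 $n'=n_1+\dots+n_k$; this gives the identification. Paramodular subgroup, defined for any such space with basis $(e_1,\dots,e_m,v_0,f_m,\dots,f_1)$: $L=\oplus\mathcal{O}e_i\oplus\oplus\varpi\mathcal{O}f_i\oplus\varpi\mathcal{O}v_0$, $\mathrm{J}=\{g\in\mathrm{SO}:g(L)=L\}$; for $g\in\mathrm{J}$, reducing its action on $L$ modulo $\mathfrak{p}$ and passing to the quotient of $L/\mathfrak{p}L$ by the kernel (spanned by the image of $\varpi v_0$) of the form induced by $q/\varpi$ gives $\bar g$ in a $2m$-dimensional orthogonal group; $\alpha(g)=\det\bar g$ if $\mathrm{char}\,k\ne2$, the Dickson–Dieudonné determinant of $\bar g$ if $\mathrm{char}\,k=2$; $\mathrm{J}^+=\ker\alpha$. $\mathrm{J}^+=\mathrm{J}^+_{2n+1}$ for $V_n$ and $\mathrm{J}^+_{2\tilde n+1}$ for $V_{\tilde n}$. *)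

theory Defs
  imports "Jordan_Normal_Form.DL_Rank" "Jordan_Normal_Form.Determinant"
begin

text \<open>F is a type of class field_char_0, carrying a normalized discrete valuation
  v (its value at 0 is irrelevant).\<close>

definition intO :: "('a::field \<Rightarrow> int) \<Rightarrow> 'a set" where
  "intO v = {x. x = 0 \<or> 0 \<le> v x}"

definition maxP :: "('a::field \<Rightarrow> int) \<Rightarrow> 'a set" where
  "maxP v = {x. x = 0 \<or> 1 \<le> v x}"

definition nonarch_local_field :: "('a::field_char_0 \<Rightarrow> int) \<Rightarrow> ('a \<Rightarrow> 'k::field) \<Rightarrow> bool" where
  "nonarch_local_field v red \<longleftrightarrow>
     (\<forall>x y. x \<noteq> 0 \<longrightarrow> y \<noteq> 0 \<longrightarrow> v (x * y) = v x + v y) \<and>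
     (\<forall>x y. x \<noteq> 0 \<longrightarrow> y \<noteq> 0 \<longrightarrow> x + y \<noteq> 0 \<longrightarrow> min (v x) (v y) \<le> v (x + y)) \<and>
     (\<exists>x. x \<noteq> 0 \<and> v x = 1) \<and>
     \<comment> \<open>completeness with respect to the valuation\<close>
     (\<forall>s :: nat \<Rightarrow> 'a.
        (\<forall>N::int. \<exists>M. \<forall>i\<ge>M. \<forall>j\<ge>M. s i = s j \<or> N \<le> v (s i - s j)) \<longrightarrow>
        (\<exists>l. \<forall>N::int. \<exists>M. \<forall>i\<ge>M. s i = l \<or> N \<le> v (s i - l))) \<and>
     \<comment> \<open>red : O \<rightarrow> k is a surjective ring homomorphism with kernel p\<close>
     (\<forall>x\<in>intO v. \<forall>y\<in>intO v. red (x + y) = red x + red y \<and> red (x * y) = red x * red y) \<and>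
     red 1 = 1 \<and>
     red ` intO v = UNIV \<and>
     (\<forall>x\<in>intO v. red x = 0 \<longleftrightarrow> x \<in> maxP v) \<and>
     \<comment> \<open>finite residue field\<close>
     finite (UNIV :: 'k set)"

text \<open>Basis order (e_1,...,e_m,v_0,f_m,...,f_1): e_i has index i-1, v_0 index m,
  f_i index 2m+1-i.  Gram matrix of the bilinear form.\<close>

definition gram :: "nat \<Rightarrow> 'a::field mat" where
  "gram m = mat (2*m+1) (2*m+1)
     (\<lambda>(i,j). if i + j = 2*m then (if i = m then 2 else 1) else 0)"

definition SO :: "nat \<Rightarrow> 'a::field_char_0 mat set" where
  "SO m = {g \<in> carrier_mat (2*m+1) (2*m+1).
             transpose_mat g * gram m * g = gram m \<and> det g = 1}"

definition latt :: "('a::field \<Rightarrow> int) \<Rightarrow> 'a \<Rightarrow> nat \<Rightarrow> 'a vec set" where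
  "latt v w m = {x \<in> carrier_vec (2*m+1).
      (\<forall>i<m. x $ i \<in> intO v) \<and>
      (\<forall>i. m \<le> i \<longrightarrow> i < 2*m+1 \<longrightarrow> x $ i \<in> {w * y | y. y \<in> intO v})}"

definition paramodular :: "('a::field_char_0 \<Rightarrow> int) \<Rightarrow> 'a \<Rightarrow> nat \<Rightarrow> 'a mat set" where
  "paramodular v w m = {g \<in> SO m. (\<lambda>x. g *\<^sub>v x) ` latt v w m = latt v w m}"

text \<open>Matrix of g in the O-basis (e_1,...,e_m, w v_0, w f_m, ..., w f_1) of L.\<close>

definition latt_coords :: "'a::field \<Rightarrow> nat \<Rightarrow> 'a mat \<Rightarrow> 'a mat" where
  "latt_coords w m g = mat (2*m+1) (2*m+1)
     (\<lambda>(i,j). g $$ (i,j) * (if j < m then 1 else w) / (if i < m then 1 else w))"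

text \<open>The induced element gbar of the 2m-dimensional orthogonal group over k:
  reduce mod p the action on L, then pass to the quotient by the line spanned by
  the image of w v_0 (index m).\<close>

definition gbar :: "('a::field \<Rightarrow> 'k::field) \<Rightarrow> 'a \<Rightarrow> nat \<Rightarrow> 'a mat \<Rightarrow> 'k mat" where
  "gbar red w m g = map_mat red (mat_delete (latt_coords w m g) m m)"

text \<open>J^+ = kernel of alpha: if char k \<noteq> 2, alpha(g) = det gbar; if char k = 2,
  alpha(g) is the Dickson invariant rank(gbar - 1) mod 2.\<close>

definition paramodular_plus ::
  "('a::field_char_0 \<Rightarrow> int) \<Rightarrow> 'a \<Rightarrow> ('a \<Rightarrow> 'k::field) \<Rightarrow> nat \<Rightarrow> 'a mat set" where
  "paramodular_plus v w red m = {g \<in> paramodular v w m.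
     if (2::'k) \<noteq> 0 then det (gbar red w m g) = 1
     else even (vec_space.rank (2*m) (gbar red w m g - 1\<^sub>m (2*m)))}"

definition mat_inv :: "'a::field mat \<Rightarrow> 'a mat" where
  "mat_inv A = (SOME B. B \<in> carrier_mat (dim_row A) (dim_row A) \<and>
                        A * B = 1\<^sub>m (dim_row A) \<and> B * A = 1\<^sub>m (dim_row A))"

definition tau :: "'a mat \<Rightarrow> 'a mat" where
  "tau A = mat (dim_col A) (dim_row A) (\<lambda>(i,j). A $$ (dim_row A - 1 - j, dim_col A - 1 - i))"

definition blockdiag3 :: "'a::zero mat \<Rightarrow> 'a mat \<Rightarrow> 'a mat \<Rightarrow> 'a mat" where
  "blockdiag3 A X B = four_block_mat A (0\<^sub>m (dim_row A) (dim_col X + dim_col B))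
      (0\<^sub>m (dim_row X + dim_row B) (dim_col A))
      (four_block_mat X (0\<^sub>m (dim_row X) (dim_col B)) (0\<^sub>m (dim_row B) (dim_col X)) B)"

fun levi_embed :: "'a::field mat list \<Rightarrow> 'a mat \<Rightarrow> 'a mat" where
  "levi_embed [] D = D"
| "levi_embed (C # Cs) D = blockdiag3 C (levi_embed Cs D) (tau (mat_inv C))"

definition GL_F :: "nat \<Rightarrow> 'a::field mat set" where
  "GL_F n = {C \<in> carrier_mat n n. invertible_mat C}"

definition GL_O :: "('a::field \<Rightarrow> int) \<Rightarrow> nat \<Rightarrow> 'a mat set" where
  "GL_O v n = {C \<in> GL_F n. (\<forall>i<n. \<forall>j<n. C $$ (i,j) \<in> intO v \<and> mat_inv C $$ (i,j) \<in> intO v)}"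

definition levi :: "nat list \<Rightarrow> nat \<Rightarrow> 'a::field_char_0 mat set" where
  "levi ns nt = {levi_embed Cs D | Cs D. list_all2 (\<lambda>C ni. C \<in> GL_F ni) Cs ns \<and> D \<in> SO nt}"

end

(*
  Everything is verified block by block for g = diag(C, X, tau C^-1).  Orthogonality is blockwise
  because, after swapping the two outer k-blocks, the Gram matrix of V_{k+m} is
  diag(J, Gram(V_m), J) with J the exchange matrix.  The element g stabilises the lattice L iff the
  matrices of g and g^-1 in an O-basis of L are integral; in that basis g is still block diagonal,
  with outer blocks C and tau C^-1, so g is paramodular iff C is in GL_k(O) and X is paramodular.
  Reducing mod p gives gbar = diag(Cbar, Xbar, tau Cbar^-1), whence det gbar = det Xbar and
  rank(gbar - 1) = 2 rank(Cbar - 1) + rank(Xbar - 1): both versions of alpha take the same value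
  on g and on X.  Induction on the number of GL-blocks finishes the proof.
*)

theory Submission
  imports Defs "Jordan_Normal_Form.Matrix_Kernel" "Jordan_Normal_Form.Gauss_Jordan_Elimination"
begin

section \<open>Rank of matrices over a field\<close>

lemma rank_plus_kernel_dim:
  fixes A :: "'a::field mat"
  assumes A: "A \<in> carrier_mat nr nc"
  shows "vec_space.rank nr A + kernel_dim A = nc"
proof -
  interpret V: vec_space "TYPE('a)" nc .
  interpret W: vec_space "TYPE('a)" nr .
  interpret K: kernel nr nc A by (unfold_locales, rule A)
  interpret L: linear_map class_ring "module_vec TYPE('a) nc" "module_vec TYPE('a) nr" "\<lambda>x. A *\<^sub>v x"
    by unfold_locales (use A in \<open>auto simp: LinearCombinations.module_hom_def module_vec_def
          mult_add_distrib_mat_vec mult_mat_vec\<close>)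
  have im: "L.imT = W.col_space A"
    unfolding W.col_space_eq[OF A] LinearCombinations.mod_hom.im_def[OF L.mod_hom_axioms]
    using A by (auto simp: module_vec_def)
  have ker: "L.kerT = mat_kernel A"
    unfolding LinearCombinations.mod_hom.ker_def[OF L.mod_hom_axioms] mat_kernel_def
    using A by (auto simp: module_vec_def)
  have "vectorspace.dim class_ring (W.vs L.imT) + vectorspace.dim class_ring (V.vs L.kerT) = V.dim"
    by (rule L.rank_nullity_main(1)) simp
  then show ?thesis
    unfolding im ker W.rank_def W.col_space_def V.dim_is_n K.kernel_dim by simp
qed

lemma rank_mult_left_invertible:
  fixes A :: "'a::field mat"
  assumes A: "A \<in> carrier_mat nr nc" and P: "P \<in> carrier_mat nr nr" and Q: "Q \<in> carrier_mat nr nr"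
    and QP: "Q * P = 1\<^sub>m nr"
  shows "vec_space.rank nr (P * A) = vec_space.rank nr A"
proof -
  have "kernel_dim (P * A) = kernel_dim A"
    using mat_kernel_mult_eq[OF A P Q QP] A P unfolding kernel_dim_def by simp
  then show ?thesis
    using rank_plus_kernel_dim[OF A] rank_plus_kernel_dim[OF mult_carrier_mat[OF P A]] by linarith
qed

lemma rank_mult_right_invertible:
  fixes A :: "'a::field mat"
  assumes A: "A \<in> carrier_mat nr nc" and P: "P \<in> carrier_mat nc nc" and Q: "Q \<in> carrier_mat nc nc"
    and PQ: "P * Q = 1\<^sub>m nc"
  shows "vec_space.rank nr (A * P) = vec_space.rank nr A"
proof -
  have "kernel_dim (A * P) = kernel_dim A"
    using mat_kernel_dim_mult_eq_right[OF A P Q PQ] A P unfolding kernel_dim_def by simp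
  then show ?thesis
    using rank_plus_kernel_dim[OF A] rank_plus_kernel_dim[OF mult_carrier_mat[OF A P]] by linarith
qed

lemma (in vec_space) lin_indpt_if_pivots:
  assumes S: "S \<subseteq> carrier_vec n"
    and piv: "\<And>u. u \<in> S \<Longrightarrow> \<exists>j<n. u $ j = 1 \<and> (\<forall>u'\<in>S. u' \<noteq> u \<longrightarrow> u' $ j = 0)"
  shows "lin_indpt S"
proof
  assume "lin_dep S"
  then obtain B a u where fin: "finite B" and BS: "B \<subseteq> S" and lc: "lincomb a B = 0\<^sub>v n"
    and uB: "u \<in> B" and au: "a u \<noteq> 0"
    unfolding lin_dep_def by auto
  obtain j where j: "j < n" "u $ j = 1" and oth: "\<forall>u'\<in>S. u' \<noteq> u \<longrightarrow> u' $ j = 0"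
    using piv[of u] uB BS by auto
  have "lincomb a B $ j = (\<Sum>x\<in>B. a x * x $ j)"
    by (rule lincomb_index[OF j(1)]) (use BS S in auto)
  also have "\<dots> = (\<Sum>x\<in>B. if x = u then a u else 0)"
    by (rule sum.cong[OF refl]) (use oth BS j in auto)
  also have "\<dots> = a u" using fin uB by simp
  finally show False using lc j au by simp
qed

lemma row_echelon_pivot_column:
  assumes R: "R \<in> carrier_mat nr nc" and piv: "pivot_fun R f nc"
    and i: "i < nr" and nz: "row R i \<noteq> 0\<^sub>v nc"
  shows "f i < nc" "R $$ (i, f i) = 1" "\<And>i'. i' < nr \<Longrightarrow> i' \<noteq> i \<Longrightarrow> R $$ (i', f i) = 0"
proof -
  note pd = pivot_funD[OF carrier_matD(1)[OF R] piv]
  show fi: "f i < nc"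
  proof (rule ccontr)
    assume "\<not> f i < nc"
    then have "row R i = 0\<^sub>v nc" using pd(2)[OF i] i R by (intro eq_vecI) auto
    then show False using nz by contradiction
  qed
  show "R $$ (i, f i) = 1" by (rule pd(4)[OF i fi])
  show "\<And>i'. i' < nr \<Longrightarrow> i' \<noteq> i \<Longrightarrow> R $$ (i', f i) = 0" using pd(5)[OF i fi] by auto
qed

text \<open>The nonzero rows of a matrix in row echelon form are linearly independent (each has a
  pivot where all other rows vanish), and by rank--nullity their number bounds the rank.\<close>

lemma rank_le_rank_transpose_row_echelon:
  fixes R :: "'a::field mat"
  assumes R: "R \<in> carrier_mat nr nc" and ref: "row_echelon_form R"
  shows "vec_space.rank nr R \<le> vec_space.rank nc (transpose_mat R)"
proof -
  define Z where "Z = {i. i < nr \<and> row R i \<noteq> 0\<^sub>v nc}"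
  interpret K: kernel nr nc R by (unfold_locales, rule R)
  have "kernel_dim R = nc - card Z"
    unfolding K.kernel_dim Z_def using find_base_vectors(6)[OF ref R] .
  then have rank_R: "vec_space.rank nr R \<le> card Z" using rank_plus_kernel_dim[OF R] by linarith
  from ref R obtain f where piv: "pivot_fun R f nc" unfolding row_echelon_form_def by auto
  note pivot = row_echelon_pivot_column[OF R piv]
  have inj: "inj_on (row R) Z"
  proof (rule inj_onI)
    fix i i' assume "i \<in> Z" and "i' \<in> Z" and eq: "row R i = row R i'"
    then have i: "i < nr" "row R i \<noteq> 0\<^sub>v nc" and i': "i' < nr" unfolding Z_def by auto
    have "R $$ (i, f i) = R $$ (i', f i)"
      using arg_cong[OF eq, of "\<lambda>u. u $ f i"] pivot(1)[OF i] i i' R by simp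
    then show "i = i'" using pivot(2)[OF i] pivot(3)[OF i i'] by fastforce
  qed
  have indpt: "LinearCombinations.module.lin_indpt class_ring (module_vec TYPE('a) nc) (row R ` Z)"
  proof (rule vec_space.lin_indpt_if_pivots)
    show "row R ` Z \<subseteq> carrier_vec nc" using R unfolding Z_def by auto
    fix u assume "u \<in> row R ` Z"
    then obtain i where iZ: "i \<in> Z" and ui: "u = row R i" by auto
    then have i: "i < nr" "row R i \<noteq> 0\<^sub>v nc" unfolding Z_def by auto
    show "\<exists>j<nc. u $ j = 1 \<and> (\<forall>u'\<in>row R ` Z. u' \<noteq> u \<longrightarrow> u' $ j = 0)"
      using pivot[OF i] i R ui unfolding Z_def by (intro exI[of _ "f i"]) auto
  qed
  have sub: "row R ` Z \<subseteq> set (cols (transpose_mat R))"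
    unfolding cols_transpose Z_def rows_def using R by auto
  have "card (row R ` Z) \<le> vec_space.rank nc (transpose_mat R)"
    by (rule vec_space.rank_ge_card_indpt[where nc = nr, OF _ sub indpt]) (use R in simp)
  then show ?thesis using rank_R card_image[OF inj] by simp
qed

lemma rank_le_rank_transpose:
  fixes A :: "'a::field mat"
  assumes A: "A \<in> carrier_mat nr nc"
  shows "vec_space.rank nr A \<le> vec_space.rank nc (transpose_mat A)"
proof -
  define R where "R = gauss_jordan_single A"
  note gj = gauss_jordan_single[OF A R_def[symmetric]]
  obtain P Q where RPA: "R = P * A" and P: "P \<in> carrier_mat nr nr" and Q: "Q \<in> carrier_mat nr nr"
    and QP: "Q * P = 1\<^sub>m nr" using gj(4) by blast
  have "transpose_mat R = transpose_mat A * transpose_mat P"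
    unfolding RPA by (rule transpose_mult[OF P A])
  moreover have "transpose_mat P * transpose_mat Q = 1\<^sub>m nr"
    using transpose_mult[OF Q P] QP by simp
  ultimately have "vec_space.rank nc (transpose_mat R) = vec_space.rank nc (transpose_mat A)"
    using rank_mult_right_invertible[of "transpose_mat A" nc nr "transpose_mat P" "transpose_mat Q"] A P Q
    by (simp only: transpose_carrier_mat)
  moreover have "vec_space.rank nr R = vec_space.rank nr A"
    unfolding RPA by (rule rank_mult_left_invertible[OF A P Q QP])
  ultimately show ?thesis using rank_le_rank_transpose_row_echelon[OF gj(2,3)] by simp
qed

lemma rank_transpose:
  fixes A :: "'a::field mat"
  assumes A: "A \<in> carrier_mat nr nc"
  shows "vec_space.rank nc (transpose_mat A) = vec_space.rank nr A"
  using rank_le_rank_transpose[OF A] rank_le_rank_transpose[of "transpose_mat A" nc nr] A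
  by auto

section \<open>Block diagonal matrices and the antidiagonal transpose\<close>

lemma blockdiag3_dims [simp]:
  "dim_row (blockdiag3 A X B) = dim_row A + (dim_row X + dim_row B)"
  "dim_col (blockdiag3 A X B) = dim_col A + (dim_col X + dim_col B)"
  unfolding blockdiag3_def by auto

lemma blockdiag3_carrier:
  assumes "A \<in> carrier_mat a a" "X \<in> carrier_mat b b" "B \<in> carrier_mat c c"
  shows "blockdiag3 A X B \<in> carrier_mat (a + (b + c)) (a + (b + c))"
  using assms by (intro carrier_matI) auto

lemma index_blockdiag3:
  assumes A: "A \<in> carrier_mat a a" and X: "X \<in> carrier_mat b b" and B: "B \<in> carrier_mat c c"
    and i: "i < a + (b + c)" and j: "j < a + (b + c)"
  shows "blockdiag3 A X B $$ (i,j) =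
    (if i < a then (if j < a then A $$ (i,j) else 0)
     else if i < a + b then (if a \<le> j \<and> j < a + b then X $$ (i - a, j - a) else 0)
     else (if a + b \<le> j then B $$ (i - a - b, j - a - b) else 0))"
  using A X B i j by (auto simp: blockdiag3_def diff_diff_add)

lemma blockdiag3_eqI:
  assumes A: "A \<in> carrier_mat a a" and X: "X \<in> carrier_mat b b" and B: "B \<in> carrier_mat c c"
    and M: "M \<in> carrier_mat (a + (b + c)) (a + (b + c))"
    and entries: "\<And>i j. i < a + (b + c) \<Longrightarrow> j < a + (b + c) \<Longrightarrow> M $$ (i,j) =
    (if i < a then (if j < a then A $$ (i,j) else 0)
     else if i < a + b then (if a \<le> j \<and> j < a + b then X $$ (i - a, j - a) else 0)
     else (if a + b \<le> j then B $$ (i - a - b, j - a - b) else 0))"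
  shows "M = blockdiag3 A X B"
  using M A X B by (intro eq_matI) (auto simp: index_blockdiag3[OF A X B] entries)

lemma one_mat_blockdiag3: "1\<^sub>m (a + (b + c)) = blockdiag3 (1\<^sub>m a) (1\<^sub>m b) (1\<^sub>m c)"
  by (rule eq_matI) (auto simp: index_blockdiag3[OF one_carrier_mat one_carrier_mat one_carrier_mat])

lemma minus_blockdiag3:
  fixes A :: "'a::ab_group_add mat"
  assumes A: "A \<in> carrier_mat a a" and X: "X \<in> carrier_mat b b" and B: "B \<in> carrier_mat c c"
   and A': "A' \<in> carrier_mat a a" and X': "X' \<in> carrier_mat b b" and B': "B' \<in> carrier_mat c c"
  shows "blockdiag3 A X B - blockdiag3 A' X' B' = blockdiag3 (A - A') (X - X') (B - B')"
  using A X B A' X' B' by (intro blockdiag3_eqI) (auto simp: index_blockdiag3[of _ a _ b _ c])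

lemma map_mat_blockdiag3:
  assumes A: "A \<in> carrier_mat a a" and X: "X \<in> carrier_mat b b" and B: "B \<in> carrier_mat c c"
   and f0: "f 0 = 0"
  shows "map_mat f (blockdiag3 A X B) = blockdiag3 (map_mat f A) (map_mat f X) (map_mat f B)"
  using A X B f0 by (intro blockdiag3_eqI) (auto simp: index_blockdiag3[of _ a _ b _ c])

lemma mult_blockdiag3:
  assumes A: "A \<in> carrier_mat a a" and X: "X \<in> carrier_mat b b" and B: "B \<in> carrier_mat c c"
   and A': "A' \<in> carrier_mat a a" and X': "X' \<in> carrier_mat b b" and B': "B' \<in> carrier_mat c c"
  shows "blockdiag3 A X B * blockdiag3 A' X' B' = blockdiag3 (A * A') (X * X') (B * B')"
proof -
  have XB: "four_block_mat X (0\<^sub>m b c) (0\<^sub>m c b) B \<in> carrier_mat (b+c) (b+c)"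
    and XB': "four_block_mat X' (0\<^sub>m b c) (0\<^sub>m c b) B' \<in> carrier_mat (b+c) (b+c)"
    using X B X' B' by auto
  have inner: "four_block_mat X (0\<^sub>m b c) (0\<^sub>m c b) B * four_block_mat X' (0\<^sub>m b c) (0\<^sub>m c b) B'
     = four_block_mat (X * X') (0\<^sub>m b c) (0\<^sub>m c b) (B * B')"
    using X B X' B' by (subst mult_four_block_mat[OF X _ _ B X' _ _ B']) auto
  have dims: "dim_row A = a" "dim_col A' = a" "dim_row X = b" "dim_col X' = b"
    "dim_row B = c" "dim_col B' = c" "dim_col A = a" "dim_col X = b" "dim_col B = c"
    "dim_row A' = a" "dim_row X' = b" "dim_row B' = c"
    using A X B A' X' B' by auto
  show ?thesis
    unfolding blockdiag3_def dims index_mult_mat(2,3)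
    using A X B A' X' B' XB XB'
    by (subst mult_four_block_mat[OF A _ _ XB A' _ _ XB'])
      (auto simp: inner left_mult_zero_mat[OF XB'] right_mult_zero_mat[OF XB]
        left_mult_zero_mat[OF A'] right_mult_zero_mat[OF A])
qed

lemma det_blockdiag3:
  fixes A :: "'a::idom mat"
  assumes A: "A \<in> carrier_mat a a" and X: "X \<in> carrier_mat b b" and B: "B \<in> carrier_mat c c"
  shows "det (blockdiag3 A X B) = det A * det X * det B"
proof -
  have XB: "four_block_mat X (0\<^sub>m b c) (0\<^sub>m c b) B \<in> carrier_mat (b+c) (b+c)" using X B by auto
  have "det (four_block_mat X (0\<^sub>m b c) (0\<^sub>m c b) B) = det X * det B"
    by (rule det_four_block_mat_lower_left_zero[OF X _ refl B]) auto
  moreover have "det (blockdiag3 A X B) = det A * det (four_block_mat X (0\<^sub>m b c) (0\<^sub>m c b) B)"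
    using A X B unfolding blockdiag3_def carrier_matD[OF A] carrier_matD[OF X] carrier_matD[OF B]
    by (intro det_four_block_mat_lower_left_zero[OF A _ _ XB]) auto
  ultimately show ?thesis by simp
qed

lemma rank_blockdiag3:
  fixes A :: "'a::field mat"
  assumes A: "A \<in> carrier_mat a a" and X: "X \<in> carrier_mat b b" and B: "B \<in> carrier_mat c c"
  shows "vec_space.rank (a + (b + c)) (blockdiag3 A X B) =
    vec_space.rank a A + vec_space.rank b X + vec_space.rank c B"
proof -
  have XB: "four_block_mat X (0\<^sub>m b c) (0\<^sub>m c b) B \<in> carrier_mat (b+c) (b+c)" using X B by auto
  have "kernel.dim (b+c) (four_block_mat X (0\<^sub>m b c) (0\<^sub>m c b) B) = kernel.dim b X + kernel.dim c B"
    by (rule kernel_four_block_0_mat[OF refl X B])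
  moreover have "kernel.dim (a+(b+c)) (blockdiag3 A X B) =
      kernel.dim a A + kernel.dim (b+c) (four_block_mat X (0\<^sub>m b c) (0\<^sub>m c b) B)"
    using A X B by (intro kernel_four_block_0_mat[OF _ A XB]) (simp add: blockdiag3_def)
  ultimately have "kernel_dim (blockdiag3 A X B) = kernel_dim A + kernel_dim X + kernel_dim B"
    using A X B unfolding kernel_dim_def by auto
  then show ?thesis
    using rank_plus_kernel_dim[OF blockdiag3_carrier[OF A X B]]
      rank_plus_kernel_dim[OF A] rank_plus_kernel_dim[OF X] rank_plus_kernel_dim[OF B] by linarith
qed

definition perm_mat :: "nat \<Rightarrow> (nat \<Rightarrow> nat) \<Rightarrow> 'a::{zero,one} mat" where
  "perm_mat n \<sigma> = mat n n (\<lambda>(i,j). if j = \<sigma> i then 1 else 0)"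

lemma perm_mat_carrier [simp]: "perm_mat n \<sigma> \<in> carrier_mat n n"
  unfolding perm_mat_def by simp

lemma perm_mat_dims [simp]: "dim_row (perm_mat n \<sigma>) = n" "dim_col (perm_mat n \<sigma>) = n"
  unfolding perm_mat_def by simp_all

lemma index_perm_mat [simp]: "i < n \<Longrightarrow> j < n \<Longrightarrow> perm_mat n \<sigma> $$ (i,j) = (if j = \<sigma> i then 1 else 0)"
  unfolding perm_mat_def by simp

lemma perm_mat_mult_left:
  fixes M :: "'a::semiring_1 mat"
  assumes M: "M \<in> carrier_mat n nc" and \<sigma>: "\<And>i. i < n \<Longrightarrow> \<sigma> i < n"
  shows "perm_mat n \<sigma> * M = mat n nc (\<lambda>(i,j). M $$ (\<sigma> i, j))"
proof (rule eq_matI)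
  fix i j assume "i < dim_row (mat n nc (\<lambda>(i,j). M $$ (\<sigma> i, j)))" "j < dim_col (mat n nc (\<lambda>(i,j). M $$ (\<sigma> i, j)))"
  then have i: "i < n" and j: "j < nc" by auto
  have "(perm_mat n \<sigma> * M) $$ (i,j) = (\<Sum>l = 0..<n. (if l = \<sigma> i then 1 else 0) * M $$ (l, j))"
    using M i j by (simp add: scalar_prod_def)
  also have "\<dots> = (\<Sum>l = 0..<n. if l = \<sigma> i then M $$ (l, j) else 0)"
    by (rule sum.cong) auto
  also have "\<dots> = M $$ (\<sigma> i, j)" using \<sigma>[OF i] by simp
  finally show "(perm_mat n \<sigma> * M) $$ (i,j) = mat n nc (\<lambda>(i,j). M $$ (\<sigma> i, j)) $$ (i,j)"
    using i j by simp
qed (use M in auto)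

lemma perm_mat_mult_right:
  fixes M :: "'a::semiring_1 mat"
  assumes M: "M \<in> carrier_mat nr n" and \<sigma>: "\<And>i. i < n \<Longrightarrow> \<sigma> i < n"
    and invol: "\<And>i. i < n \<Longrightarrow> \<sigma> (\<sigma> i) = i"
  shows "M * perm_mat n \<sigma> = mat nr n (\<lambda>(i,j). M $$ (i, \<sigma> j))"
proof (rule eq_matI)
  fix i j assume "i < dim_row (mat nr n (\<lambda>(i,j). M $$ (i, \<sigma> j)))" "j < dim_col (mat nr n (\<lambda>(i,j). M $$ (i, \<sigma> j)))"
  then have i: "i < nr" and j: "j < n" by auto
  have "(M * perm_mat n \<sigma>) $$ (i,j) = (\<Sum>l = 0..<n. M $$ (i, l) * (if j = \<sigma> l then 1 else 0))"
    using M i j by (simp add: scalar_prod_def)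
  also have "\<dots> = (\<Sum>l = 0..<n. if l = \<sigma> j then M $$ (i, l) else 0)"
    by (rule sum.cong[OF refl]) (use \<sigma> invol j in auto)
  also have "\<dots> = M $$ (i, \<sigma> j)" using \<sigma>[OF j] by simp
  finally show "(M * perm_mat n \<sigma>) $$ (i,j) = mat nr n (\<lambda>(i,j). M $$ (i, \<sigma> j)) $$ (i,j)"
    using i j by simp
qed (use M in auto)

lemma perm_mat_involution_square:
  assumes \<sigma>: "\<And>i. i < n \<Longrightarrow> \<sigma> i < n" and invol: "\<And>i. i < n \<Longrightarrow> \<sigma> (\<sigma> i) = i"
  shows "perm_mat n \<sigma> * perm_mat n \<sigma> = (1\<^sub>m n :: 'a::semiring_1 mat)"
  using \<sigma> invol by (subst perm_mat_mult_left[OF perm_mat_carrier \<sigma>]) (auto intro!: eq_matI)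

definition exchange_mat :: "nat \<Rightarrow> 'a::{zero,one} mat" where
  "exchange_mat n = perm_mat n (\<lambda>i. n - 1 - i)"

lemma exchange_mat_carrier [simp]: "exchange_mat n \<in> carrier_mat n n"
  unfolding exchange_mat_def by simp

lemma exchange_mat_dims [simp]: "dim_row (exchange_mat n) = n" "dim_col (exchange_mat n) = n"
  unfolding exchange_mat_def by simp_all

lemma index_exchange_mat [simp]:
  "i < n \<Longrightarrow> j < n \<Longrightarrow> exchange_mat n $$ (i,j) = (if i + j = n - 1 then 1 else 0)"
  unfolding exchange_mat_def by auto

lemma transpose_exchange_mat: "transpose_mat (exchange_mat n) = exchange_mat n"
  by (rule eq_matI) auto

lemma exchange_mat_square: "exchange_mat n * exchange_mat n = (1\<^sub>m n :: 'a::semiring_1 mat)"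
  unfolding exchange_mat_def by (rule perm_mat_involution_square) auto

lemma tau_carrier [simp]: "A \<in> carrier_mat n n \<Longrightarrow> tau A \<in> carrier_mat n n"
  unfolding tau_def by auto

lemma tau_dims [simp]: "dim_row (tau A) = dim_col A" "dim_col (tau A) = dim_row A"
  unfolding tau_def by auto

lemma index_tau:
  "A \<in> carrier_mat n n \<Longrightarrow> i < n \<Longrightarrow> j < n \<Longrightarrow> tau A $$ (i,j) = A $$ (n - 1 - j, n - 1 - i)"
  unfolding tau_def by auto

lemma tau_eq_exchange_transpose:
  fixes A :: "'a::semiring_1 mat"
  assumes A: "A \<in> carrier_mat n n"
  shows "tau A = exchange_mat n * transpose_mat A * exchange_mat n"
proof -
  have "exchange_mat n * transpose_mat A = mat n n (\<lambda>(i,j). A $$ (j, n - 1 - i))"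
    using A unfolding exchange_mat_def by (subst perm_mat_mult_left) (auto intro!: eq_matI)
  moreover have "mat n n (\<lambda>(i,j). A $$ (j, n - 1 - i)) * exchange_mat n = tau A"
    using A unfolding exchange_mat_def by (subst perm_mat_mult_right) (auto intro!: eq_matI simp: tau_def)
  ultimately show ?thesis by simp
qed

lemma transpose_tau: "A \<in> carrier_mat n n \<Longrightarrow> transpose_mat (tau A) = tau (transpose_mat A)"
  by (rule eq_matI) (auto simp: index_tau)

lemma tau_one: "tau (1\<^sub>m n :: 'a::{zero,one} mat) = 1\<^sub>m n"
  by (rule eq_matI) (auto simp: tau_def)

lemma tau_minus:
  fixes A B :: "'a::ab_group_add mat"
  assumes A: "A \<in> carrier_mat n n" and B: "B \<in> carrier_mat n n"
  shows "tau (A - B) = tau A - tau B"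
  using A B by (intro eq_matI) (auto simp: index_tau index_tau[OF minus_carrier_mat[OF B]])

lemma map_mat_tau: "A \<in> carrier_mat n n \<Longrightarrow> map_mat f (tau A) = tau (map_mat f A)"
  by (rule eq_matI) (auto simp: index_tau)

lemma tau_mult:
  fixes A B :: "'a::comm_semiring_1 mat"
  assumes A: "A \<in> carrier_mat n n" and B: "B \<in> carrier_mat n n"
  shows "tau (A * B) = tau B * tau A"
proof (rule eq_matI)
  fix i j assume "i < dim_row (tau B * tau A)" "j < dim_col (tau B * tau A)"
  then have i: "i < n" and j: "j < n" using A B by auto
  have "tau (A * B) $$ (i,j) = (\<Sum>l = 0..<n. A $$ (n - 1 - j, l) * B $$ (l, n - 1 - i))"
    using A B i j by (simp add: index_tau[OF mult_carrier_mat[OF A B]] scalar_prod_def)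
  also have "\<dots> = (\<Sum>l = 0..<n. A $$ (n - 1 - j, n - Suc l) * B $$ (n - Suc l, n - 1 - i))"
    using sum.atLeastLessThan_rev[of "\<lambda>l. A $$ (n - 1 - j, l) * B $$ (l, n - 1 - i)" 0 n] by simp
  also have "\<dots> = (tau B * tau A) $$ (i,j)"
    using A B i j by (auto simp: index_tau scalar_prod_def mult.commute intro!: sum.cong)
  finally show "tau (A * B) $$ (i,j) = (tau B * tau A) $$ (i,j)" .
qed (use A B in auto)

lemma det_tau:
  fixes A :: "'a::comm_ring_1 mat"
  assumes A: "A \<in> carrier_mat n n"
  shows "det (tau A) = det A"
proof -
  let ?J = "exchange_mat n :: 'a mat"
  have "det ?J * det ?J = det (?J * ?J)"
    by (simp add: det_mult[OF exchange_mat_carrier exchange_mat_carrier])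
  also have "\<dots> = 1" by (simp add: exchange_mat_square)
  finally have "det ?J * det ?J = 1" .
  moreover have "det (tau A) = det A * (det ?J * det ?J)"
    using A unfolding tau_eq_exchange_transpose[OF A]
    by (simp add: det_mult[OF mult_carrier_mat[OF exchange_mat_carrier] exchange_mat_carrier]
        det_mult[OF exchange_mat_carrier] det_transpose ac_simps)
  ultimately show ?thesis by simp
qed

lemma rank_tau:
  fixes A :: "'a::field mat"
  assumes A: "A \<in> carrier_mat n n"
  shows "vec_space.rank n (tau A) = vec_space.rank n A"
proof -
  let ?J = "exchange_mat n :: 'a mat"
  have AT: "transpose_mat A \<in> carrier_mat n n" using A by simp
  have "vec_space.rank n (tau A) = vec_space.rank n (?J * (transpose_mat A * ?J))"
    unfolding tau_eq_exchange_transpose[OF A]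
    by (simp add: assoc_mult_mat[OF exchange_mat_carrier AT exchange_mat_carrier])
  also have "\<dots> = vec_space.rank n (transpose_mat A * ?J)"
    by (rule rank_mult_left_invertible[OF mult_carrier_mat[OF AT exchange_mat_carrier]
          exchange_mat_carrier exchange_mat_carrier exchange_mat_square])
  also have "\<dots> = vec_space.rank n (transpose_mat A)"
    by (rule rank_mult_right_invertible[OF AT exchange_mat_carrier exchange_mat_carrier
          exchange_mat_square])
  also have "\<dots> = vec_space.rank n A" by (rule rank_transpose[OF A])
  finally show ?thesis .
qed

lemma det_blockdiag3_tau_inverse:
  fixes C :: "'a::idom mat"
  assumes C: "C \<in> carrier_mat k k" and C': "C' \<in> carrier_mat k k" and C'C: "C' * C = 1\<^sub>m k"
    and G: "G \<in> carrier_mat b b"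
  shows "det (blockdiag3 C G (tau C')) = det G"
  using det_mult[OF C' C] C'C
  by (simp add: det_blockdiag3[OF C G tau_carrier[OF C']] det_tau[OF C'] mult.commute)

text \<open>The block \<open>tau C' - 1\<close> has the same rank as \<open>C - 1\<close>, because
  \<open>C' - 1 = (- C') * (C - 1)\<close>.\<close>

lemma rank_blockdiag3_tau_inverse_minus_one:
  fixes C :: "'a::field mat"
  assumes C: "C \<in> carrier_mat k k" and C': "C' \<in> carrier_mat k k"
    and CC': "C * C' = 1\<^sub>m k" and C'C: "C' * C = 1\<^sub>m k" and G: "G \<in> carrier_mat b b"
  shows "vec_space.rank (k + (b + k)) (blockdiag3 C G (tau C') - 1\<^sub>m (k + (b + k))) =
    2 * vec_space.rank k (C - 1\<^sub>m k) + vec_space.rank b (G - 1\<^sub>m b)"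
proof -
  have T: "tau C' \<in> carrier_mat k k" using C' by simp
  have "tau C' - 1\<^sub>m k = tau (C' - 1\<^sub>m k)"
    by (simp add: tau_minus[OF C' one_carrier_mat] tau_one)
  then have "vec_space.rank k (tau C' - 1\<^sub>m k) = vec_space.rank k (C' - 1\<^sub>m k)"
    using rank_tau[OF minus_carrier_mat[OF one_carrier_mat, of C' k]] C' by simp
  also have "C' - 1\<^sub>m k = (- C') * (C - 1\<^sub>m k)"
  proof -
    have "(- C') * (C - 1\<^sub>m k) = - 1\<^sub>m k - - C'"
      using C C' C'C by (simp add: mult_minus_distrib_mat[OF _ C])
    also have "\<dots> = C' - 1\<^sub>m k" using C' by (intro eq_matI) auto
    finally show ?thesis by simp
  qed
  also have "vec_space.rank k \<dots> = vec_space.rank k (C - 1\<^sub>m k)"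
    by (rule rank_mult_left_invertible[of _ k k _ "- C"]) (use C C' CC' in auto)
  finally have "vec_space.rank k (tau C' - 1\<^sub>m k) = vec_space.rank k (C - 1\<^sub>m k)" .
  moreover have "blockdiag3 C G (tau C') - 1\<^sub>m (k + (b + k)) =
      blockdiag3 (C - 1\<^sub>m k) (G - 1\<^sub>m b) (tau C' - 1\<^sub>m k)"
    unfolding one_mat_blockdiag3 by (rule minus_blockdiag3[OF C G T]) auto
  ultimately show ?thesis
    using rank_blockdiag3[OF minus_carrier_mat[OF one_carrier_mat, of C k]
        minus_carrier_mat[OF one_carrier_mat, of G b] minus_carrier_mat[OF one_carrier_mat, of "tau C'" k]]
      C G T by simp
qed

section \<open>Levi blocks in the orthogonal group\<close>

definition outer_block_swap :: "nat \<Rightarrow> nat \<Rightarrow> nat \<Rightarrow> nat" where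
  "outer_block_swap k b i = (if i < k then i + k + b else if i < k + b then i else i - (k + b))"

lemma outer_block_swap_less: "i < k + (b + k) \<Longrightarrow> outer_block_swap k b i < k + (b + k)"
  unfolding outer_block_swap_def by auto

lemma outer_block_swap_involution: "i < k + (b + k) \<Longrightarrow> outer_block_swap k b (outer_block_swap k b i) = i"
  unfolding outer_block_swap_def by auto

lemma gram_carrier [simp]: "gram m \<in> carrier_mat (2*m+1) (2*m+1)"
  unfolding gram_def by simp

lemma index_gram: "i < 2*m+1 \<Longrightarrow> j < 2*m+1 \<Longrightarrow>
   gram m $$ (i,j) = (if i + j = 2*m then (if i = m then 2 else 1) else 0)"
  unfolding gram_def by simp

text \<open>In the basis order of \<open>V\<^sub>k\<^sub>+\<^sub>m\<close> the Gram matrix is antidiagonal: the first and last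
  \<open>k\<close> coordinates pair with each other through the exchange matrix, the middle block is the
  Gram matrix of \<open>V\<^sub>m\<close>.\<close>

lemma gram_eq_swap_blockdiag3:
  "(gram (k + m) :: 'a::field mat) = perm_mat (k + ((2*m+1) + k)) (outer_block_swap k (2*m+1)) *
     blockdiag3 (exchange_mat k) (gram m) (exchange_mat k)"
proof -
  let ?N = "k + ((2*m+1) + k)"
  let ?D = "blockdiag3 (exchange_mat k) (gram m) (exchange_mat k) :: 'a mat"
  have D: "?D \<in> carrier_mat ?N ?N"
    by (rule blockdiag3_carrier[OF exchange_mat_carrier gram_carrier exchange_mat_carrier])
  have "gram (k + m) $$ (i,j) = ?D $$ (outer_block_swap k (2*m+1) i, j)" if i: "i < ?N" and j: "j < ?N" for i j
  proof -
    consider "i < k" | "k \<le> i" "i < k + (2*m+1)" | "k + (2*m+1) \<le> i" by linarith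
    then show ?thesis
      unfolding index_blockdiag3[OF exchange_mat_carrier gram_carrier exchange_mat_carrier
          outer_block_swap_less[OF i] j]
      by cases (use i j in \<open>auto simp: index_gram outer_block_swap_def\<close>)
  qed
  then show ?thesis
    by (subst perm_mat_mult_left[OF D outer_block_swap_less]) (auto intro!: eq_matI simp: gram_def)
qed

lemma transpose_blockdiag3_mult_swap:
  fixes A :: "'a::semiring_1 mat"
  assumes A: "A \<in> carrier_mat k k" and X: "X \<in> carrier_mat b b" and B: "B \<in> carrier_mat k k"
  shows "transpose_mat (blockdiag3 A X B) * perm_mat (k + (b + k)) (outer_block_swap k b) =
    perm_mat (k + (b + k)) (outer_block_swap k b) *
    blockdiag3 (transpose_mat B) (transpose_mat X) (transpose_mat A)"
proof -
  let ?N = "k + (b + k)" and ?s = "outer_block_swap k b"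
  have AT: "transpose_mat A \<in> carrier_mat k k" and XT: "transpose_mat X \<in> carrier_mat b b"
    and BT: "transpose_mat B \<in> carrier_mat k k" using A X B by auto
  have g: "transpose_mat (blockdiag3 A X B) \<in> carrier_mat ?N ?N"
    using blockdiag3_carrier[OF A X B] by simp
  have g': "blockdiag3 (transpose_mat B) (transpose_mat X) (transpose_mat A) \<in> carrier_mat ?N ?N"
    by (rule blockdiag3_carrier[OF BT XT AT])
  have "blockdiag3 A X B $$ (?s j, i) =
      blockdiag3 (transpose_mat B) (transpose_mat X) (transpose_mat A) $$ (?s i, j)"
    if i: "i < ?N" and j: "j < ?N" for i j
    unfolding index_blockdiag3[OF A X B outer_block_swap_less[OF j] i]
      index_blockdiag3[OF BT XT AT outer_block_swap_less[OF i] j]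
    using i j A X B by (auto simp: outer_block_swap_def)
  moreover have s: "\<And>i. i < ?N \<Longrightarrow> ?s i < ?N" "\<And>i. i < ?N \<Longrightarrow> ?s (?s i) = i"
    by (simp_all add: outer_block_swap_less outer_block_swap_involution)
  moreover have "transpose_mat (blockdiag3 A X B) * perm_mat ?N ?s =
      mat ?N ?N (\<lambda>(i,j). transpose_mat (blockdiag3 A X B) $$ (i, ?s j))"
    by (rule perm_mat_mult_right[OF g s])
  moreover have "perm_mat ?N ?s * blockdiag3 (transpose_mat B) (transpose_mat X) (transpose_mat A) =
      mat ?N ?N (\<lambda>(i,j). blockdiag3 (transpose_mat B) (transpose_mat X) (transpose_mat A) $$ (?s i, j))"
    by (rule perm_mat_mult_left[OF g' s(1)])
  ultimately show ?thesis using A X B by (auto intro!: eq_matI)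
qed

lemma blockdiag3_gram_congruence:
  fixes A :: "'a::field mat"
  assumes A: "A \<in> carrier_mat k k" and X: "X \<in> carrier_mat (2*m+1) (2*m+1)" and B: "B \<in> carrier_mat k k"
  shows "transpose_mat (blockdiag3 A X B) * gram (k + m) * blockdiag3 A X B =
    perm_mat (k + ((2*m+1) + k)) (outer_block_swap k (2*m+1)) *
    blockdiag3 (transpose_mat B * exchange_mat k * A) (transpose_mat X * gram m * X)
      (transpose_mat A * exchange_mat k * B)"
proof -
  let ?N = "k + ((2*m+1) + k)"
  let ?P = "perm_mat ?N (outer_block_swap k (2*m+1)) :: 'a mat"
  let ?J = "exchange_mat k :: 'a mat"
  let ?g = "blockdiag3 A X B"
  let ?g' = "blockdiag3 (transpose_mat B) (transpose_mat X) (transpose_mat A)"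
  have AT: "transpose_mat A \<in> carrier_mat k k" and XT: "transpose_mat X \<in> carrier_mat (2*m+1) (2*m+1)"
    and BT: "transpose_mat B \<in> carrier_mat k k" using A X B by auto
  have g: "?g \<in> carrier_mat ?N ?N" by (rule blockdiag3_carrier[OF A X B])
  have g': "?g' \<in> carrier_mat ?N ?N" by (rule blockdiag3_carrier[OF BT XT AT])
  have D: "blockdiag3 ?J (gram m) ?J \<in> carrier_mat ?N ?N"
    by (rule blockdiag3_carrier[OF exchange_mat_carrier gram_carrier exchange_mat_carrier])
  have "transpose_mat ?g * gram (k + m) * ?g = (transpose_mat ?g * ?P) * blockdiag3 ?J (gram m) ?J * ?g"
    unfolding gram_eq_swap_blockdiag3[where 'a='a, of k m] using g D
    by (simp add: assoc_mult_mat[of _ ?N ?N _ ?N _ ?N])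
  also have "\<dots> = ?P * (?g' * blockdiag3 ?J (gram m) ?J * ?g)"
    unfolding transpose_blockdiag3_mult_swap[OF A X B] using g D g'
    by (simp add: assoc_mult_mat[of _ ?N ?N _ ?N _ ?N])
  also have "?g' * blockdiag3 ?J (gram m) ?J * ?g =
      blockdiag3 (transpose_mat B * ?J * A) (transpose_mat X * gram m * X) (transpose_mat A * ?J * B)"
    by (simp add: mult_blockdiag3[OF BT XT AT exchange_mat_carrier gram_carrier exchange_mat_carrier]
        mult_blockdiag3[OF mult_carrier_mat[OF BT exchange_mat_carrier] mult_carrier_mat[OF XT gram_carrier]
          mult_carrier_mat[OF AT exchange_mat_carrier] A X B])
  finally show ?thesis .
qed

lemma blockdiag3_tau_inverse_mem_SO:
  fixes A :: "'a::field_char_0 mat"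
  assumes A: "A \<in> carrier_mat k k" and A': "A' \<in> carrier_mat k k" and A'A: "A' * A = 1\<^sub>m k"
    and X: "X \<in> SO m"
  shows "blockdiag3 A X (tau A') \<in> SO (k + m)"
proof -
  let ?J = "exchange_mat k :: 'a mat"
  let ?B = "tau A'"
  have Xc: "X \<in> carrier_mat (2*m+1) (2*m+1)" and X_orth: "transpose_mat X * gram m * X = gram m"
    and X_det: "det X = 1" using X unfolding SO_def by auto
  have AT: "transpose_mat A \<in> carrier_mat k k" and A'T: "transpose_mat A' \<in> carrier_mat k k"
    and B: "?B \<in> carrier_mat k k" using A A' by auto
  have J: "?J \<in> carrier_mat k k" by simp
  have BT: "transpose_mat ?B = ?J * A' * ?J"
    unfolding transpose_tau[OF A'] tau_eq_exchange_transpose[OF A'T] using A' by simp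
  have left: "transpose_mat ?B * ?J * A = ?J"
  proof -
    have "transpose_mat ?B * ?J * A = ?J * A' * (?J * ?J) * A"
      unfolding BT using A' by (simp add: assoc_mult_mat[OF mult_carrier_mat[OF J A'] J J])
    also have "\<dots> = ?J * (A' * A)"
      using A A' by (simp add: exchange_mat_square assoc_mult_mat[OF J A' A])
    finally show ?thesis using A'A by (simp add: right_mult_one_mat[OF J])
  qed
  have "transpose_mat (transpose_mat ?B * ?J * A) = transpose_mat A * (?J * ?B)"
    using A B by (simp add: transpose_mult[of _ k k _ k] transpose_exchange_mat)
  then have right: "transpose_mat A * ?J * ?B = ?J"
    unfolding left transpose_exchange_mat by (simp add: assoc_mult_mat[OF AT J B])
  have "transpose_mat (blockdiag3 A X ?B) * gram (k + m) * blockdiag3 A X ?B = gram (k + m)"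
    unfolding blockdiag3_gram_congruence[OF A Xc B] left right X_orth
    by (rule gram_eq_swap_blockdiag3[symmetric])
  moreover have "det (blockdiag3 A X ?B) = 1"
    unfolding det_blockdiag3_tau_inverse[OF A A' A'A Xc] by (rule X_det)
  moreover have "blockdiag3 A X ?B \<in> carrier_mat (2*(k+m)+1) (2*(k+m)+1)"
    using blockdiag3_carrier[OF A Xc B] by (simp add: algebra_simps)
  ultimately show ?thesis unfolding SO_def by blast
qed

lemma mat_inv_inverse:
  fixes C :: "'a::field mat"
  assumes C: "C \<in> carrier_mat n n" and inv: "invertible_mat C"
  shows "mat_inv C \<in> carrier_mat n n" "C * mat_inv C = 1\<^sub>m n" "mat_inv C * C = 1\<^sub>m n"
proof -
  from inv obtain B where CB: "inverts_mat C B" and BC: "inverts_mat B C"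
    unfolding invertible_mat_def by blast
  then have "B \<in> carrier_mat n n" using C unfolding inverts_mat_def
    by (metis carrier_matD carrier_matI index_mult_mat(2,3) index_one_mat(2,3))
  with CB BC C have "\<exists>B. B \<in> carrier_mat (dim_row C) (dim_row C) \<and>
      C * B = 1\<^sub>m (dim_row C) \<and> B * C = 1\<^sub>m (dim_row C)"
    unfolding inverts_mat_def by auto
  from someI_ex[OF this] C
  show "mat_inv C \<in> carrier_mat n n" "C * mat_inv C = 1\<^sub>m n" "mat_inv C * C = 1\<^sub>m n"
    unfolding mat_inv_def by auto
qed

lemma SO_invertible:
  assumes X: "X \<in> SO m"
  shows "invertible_mat X"
proof -
  have Xc: "X \<in> carrier_mat (2*m+1) (2*m+1)" and "det X = 1" using X unfolding SO_def by auto
  then have "X \<in> Units (ring_mat TYPE('a) (2*m+1) ())" by (intro det_non_zero_imp_unit) simp_all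
  then obtain B where "B \<in> carrier_mat (2*m+1) (2*m+1)" "B * X = 1\<^sub>m (2*m+1)" "X * B = 1\<^sub>m (2*m+1)"
    unfolding Units_def by (auto simp: ring_mat_def)
  with Xc show ?thesis
    unfolding invertible_mat_def inverts_mat_def by auto
qed

section \<open>Integrality and the lattice\<close>

locale valuation =
  fixes v :: "'a::field \<Rightarrow> int"
  assumes v_mult: "x \<noteq> 0 \<Longrightarrow> y \<noteq> 0 \<Longrightarrow> v (x * y) = v x + v y"
    and v_ultrametric: "x \<noteq> 0 \<Longrightarrow> y \<noteq> 0 \<Longrightarrow> x + y \<noteq> 0 \<Longrightarrow> min (v x) (v y) \<le> v (x + y)"
begin

lemma zero_mem_intO [simp]: "0 \<in> intO v"
  unfolding intO_def by simp

lemma one_mem_intO [simp]: "1 \<in> intO v"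
  using v_mult[of 1 1] unfolding intO_def by simp

lemma intO_add: "x \<in> intO v \<Longrightarrow> y \<in> intO v \<Longrightarrow> x + y \<in> intO v"
  using v_ultrametric[of x y] unfolding intO_def by (cases "x = 0 \<or> y = 0 \<or> x + y = 0") auto

lemma intO_mult: "x \<in> intO v \<Longrightarrow> y \<in> intO v \<Longrightarrow> x * y \<in> intO v"
  using v_mult[of x y] unfolding intO_def by (cases "x = 0 \<or> y = 0") auto

lemma intO_sum: "(\<And>i. i \<in> S \<Longrightarrow> f i \<in> intO v) \<Longrightarrow> sum f S \<in> intO v"
  by (induct S rule: infinite_finite_induct) (auto intro: intO_add)

end

locale residue_reduction = valuation v for v :: "'a::field \<Rightarrow> int" +
  fixes red :: "'a \<Rightarrow> 'k::field"
  assumes red_add: "x \<in> intO v \<Longrightarrow> y \<in> intO v \<Longrightarrow> red (x + y) = red x + red y"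
    and red_mult: "x \<in> intO v \<Longrightarrow> y \<in> intO v \<Longrightarrow> red (x * y) = red x * red y"
    and red_one: "red 1 = 1"
begin

lemma red_zero [simp]: "red 0 = 0"
  using red_add[OF zero_mem_intO zero_mem_intO] by (metis add_0 add_cancel_right_right)

lemma red_sum: "(\<And>i. i \<in> S \<Longrightarrow> f i \<in> intO v) \<Longrightarrow> red (sum f S) = (\<Sum>i\<in>S. red (f i))"
  by (induct S rule: infinite_finite_induct) (auto simp: red_add intO_sum)

end

lemma nonarch_local_field_residue_reduction:
  "nonarch_local_field v red \<Longrightarrow> residue_reduction v red"
  unfolding nonarch_local_field_def by unfold_locales blast+

definition integral_mat :: "('a::field \<Rightarrow> int) \<Rightarrow> 'a mat \<Rightarrow> bool" where
  "integral_mat v A \<longleftrightarrow> (\<forall>i<dim_row A. \<forall>j<dim_col A. A $$ (i,j) \<in> intO v)"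

lemma integral_mat_blockdiag3:
  assumes A: "A \<in> carrier_mat a a" and X: "X \<in> carrier_mat b b" and B: "B \<in> carrier_mat c c"
  shows "integral_mat v (blockdiag3 A X B) \<longleftrightarrow> integral_mat v A \<and> integral_mat v X \<and> integral_mat v B"
proof
  assume H: "integral_mat v (blockdiag3 A X B)"
  have entry: "\<And>i j. i < a + (b + c) \<Longrightarrow> j < a + (b + c) \<Longrightarrow> blockdiag3 A X B $$ (i,j) \<in> intO v"
    using H A X B unfolding integral_mat_def by auto
  show "integral_mat v A \<and> integral_mat v X \<and> integral_mat v B"
    unfolding integral_mat_def
  proof (intro conjI allI impI)
    fix i j
    show "A $$ (i,j) \<in> intO v" if "i < dim_row A" "j < dim_col A"
      using entry[of i j] that A X B by (simp add: index_blockdiag3[OF A X B])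
    show "X $$ (i,j) \<in> intO v" if "i < dim_row X" "j < dim_col X"
      using entry[of "a + i" "a + j"] that A X B by (simp add: index_blockdiag3[OF A X B])
    show "B $$ (i,j) \<in> intO v" if "i < dim_row B" "j < dim_col B"
      using entry[of "a + b + i" "a + b + j"] that A X B by (simp add: index_blockdiag3[OF A X B])
  qed
next
  assume "integral_mat v A \<and> integral_mat v X \<and> integral_mat v B"
  then show "integral_mat v (blockdiag3 A X B)"
    using A X B unfolding integral_mat_def by (auto simp: index_blockdiag3[OF A X B] intO_def)
qed

lemma integral_mat_tau:
  assumes A: "A \<in> carrier_mat n n"
  shows "integral_mat v (tau A) \<longleftrightarrow> integral_mat v A"
proof
  assume "integral_mat v (tau A)"
  then have "tau A $$ (n - 1 - j, n - 1 - i) \<in> intO v" if "i < n" "j < n" for i j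
    using that A unfolding integral_mat_def by auto
  then show "integral_mat v A"
    using A unfolding integral_mat_def by (force simp: index_tau[OF A])
next
  assume "integral_mat v A"
  then show "integral_mat v (tau A)"
    using A unfolding integral_mat_def by (auto simp: index_tau[OF A])
qed

context residue_reduction
begin

lemma map_mat_red_mult:
  assumes A: "A \<in> carrier_mat n p" and B: "B \<in> carrier_mat p q"
    and "integral_mat v A" and "integral_mat v B"
  shows "map_mat red (A * B) = map_mat red A * map_mat red B"
proof (rule eq_matI)
  fix i j assume "i < dim_row (map_mat red A * map_mat red B)" "j < dim_col (map_mat red A * map_mat red B)"
  then have i: "i < n" and j: "j < q" using A B by auto
  have "map_mat red (A * B) $$ (i,j) = red (\<Sum>l = 0..<p. A $$ (i,l) * B $$ (l,j))"
    using A B i j by (simp add: scalar_prod_def)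
  also have "\<dots> = (\<Sum>l = 0..<p. red (A $$ (i,l)) * red (B $$ (l,j)))"
    using assms i j unfolding integral_mat_def
    by (subst red_sum) (auto intro!: intO_mult red_mult sum.cong)
  also have "\<dots> = (map_mat red A * map_mat red B) $$ (i,j)"
    using A B i j by (simp add: scalar_prod_def)
  finally show "map_mat red (A * B) $$ (i,j) = (map_mat red A * map_mat red B) $$ (i,j)" .
qed (use A B in auto)

lemma map_mat_red_one: "map_mat red (1\<^sub>m n) = 1\<^sub>m n"
  by (rule eq_matI) (auto simp: red_one)

end

definition latt_scale :: "'a::field \<Rightarrow> nat \<Rightarrow> nat \<Rightarrow> 'a" where
  "latt_scale w m i = (if i < m then 1 else w)"

lemma index_latt_coords: "i < 2*m+1 \<Longrightarrow> j < 2*m+1 \<Longrightarrow>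
    latt_coords w m g $$ (i,j) = g $$ (i,j) * latt_scale w m j / latt_scale w m i"
  unfolding latt_coords_def latt_scale_def by simp

lemma latt_coords_dims [simp]:
  "dim_row (latt_coords w m g) = 2*m+1" "dim_col (latt_coords w m g) = 2*m+1"
  unfolding latt_coords_def by simp_all

lemma latt_coords_carrier: "latt_coords w m g \<in> carrier_mat (2*m+1) (2*m+1)"
  by (simp add: carrier_matI)

lemma mem_latt_iff:
  "x \<in> latt v w m \<longleftrightarrow>
    x \<in> carrier_vec (2*m+1) \<and> (\<forall>i<2*m+1. \<exists>y\<in>intO v. x $ i = latt_scale w m i * y)"
proof -
  have "(\<exists>y\<in>intO v. x $ i = latt_scale w m i * y) \<longleftrightarrow>
      (if i < m then x $ i \<in> intO v else x $ i \<in> {w * y | y. y \<in> intO v})" for i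
    unfolding latt_scale_def by auto
  then show ?thesis unfolding latt_def by (auto simp del: Bex_def)
qed

context valuation
begin

lemma integral_latt_coords_if_stable:
  assumes w: "w \<noteq> 0" and g: "g \<in> carrier_mat (2*m+1) (2*m+1)"
    and stable: "\<forall>x\<in>latt v w m. g *\<^sub>v x \<in> latt v w m"
  shows "integral_mat v (latt_coords w m g)"
  unfolding integral_mat_def
proof (intro allI impI)
  let ?N = "2*m+1" and ?s = "latt_scale w m"
  have s_nz: "?s i \<noteq> 0" for i using w unfolding latt_scale_def by simp
  fix i j assume "i < dim_row (latt_coords w m g)" "j < dim_col (latt_coords w m g)"
  then have i: "i < ?N" and j: "j < ?N" by (simp_all add: latt_coords_def)
  define x where "x = vec ?N (\<lambda>l. if l = j then ?s j else 0)"
  have "x \<in> latt v w m" unfolding mem_latt_iff x_def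
    by (auto intro: bexI[of _ 1] bexI[of _ 0])
  then have "g *\<^sub>v x \<in> latt v w m" using stable by blast
  then have "\<exists>y\<in>intO v. (g *\<^sub>v x) $ i = ?s i * y" using i by (simp add: mem_latt_iff)
  then obtain y where y: "y \<in> intO v" and gx: "(g *\<^sub>v x) $ i = ?s i * y" by blast
  have "(g *\<^sub>v x) $ i = (\<Sum>l = 0..<?N. g $$ (i,l) * (if l = j then ?s j else 0))"
    using g i unfolding x_def by (simp add: scalar_prod_def)
  also have "\<dots> = (\<Sum>l = 0..<?N. if l = j then g $$ (i,j) * ?s j else 0)"
    by (rule sum.cong) auto
  also have "\<dots> = g $$ (i,j) * ?s j" using j by simp
  finally have "latt_coords w m g $$ (i,j) = y"
    using gx s_nz by (simp add: index_latt_coords[OF i j] field_simps)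
  with y show "latt_coords w m g $$ (i,j) \<in> intO v" by simp
qed

lemma stable_if_integral_latt_coords:
  assumes w: "w \<noteq> 0" and g: "g \<in> carrier_mat (2*m+1) (2*m+1)"
    and integral: "integral_mat v (latt_coords w m g)" and x: "x \<in> latt v w m"
  shows "g *\<^sub>v x \<in> latt v w m"
  unfolding mem_latt_iff
proof (intro conjI allI impI)
  let ?N = "2*m+1" and ?s = "latt_scale w m" and ?c = "latt_coords w m g"
  have s_nz: "?s i \<noteq> 0" for i using w unfolding latt_scale_def by simp
  have xc: "x \<in> carrier_vec ?N" using x unfolding mem_latt_iff by simp
  obtain y where y: "\<And>l. l < ?N \<Longrightarrow> y l \<in> intO v \<and> x $ l = ?s l * y l"
    using x unfolding mem_latt_iff by metis
  show "g *\<^sub>v x \<in> carrier_vec ?N" using g xc by simp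
  fix i assume i: "i < ?N"
  have "(g *\<^sub>v x) $ i = (\<Sum>l = 0..<?N. g $$ (i,l) * x $ l)"
    using g i xc by (simp add: scalar_prod_def)
  also have "\<dots> = (\<Sum>l = 0..<?N. ?s i * (?c $$ (i,l) * y l))"
    using y s_nz[of i] by (intro sum.cong) (simp_all add: index_latt_coords[OF i])
  also have "\<dots> = ?s i * (\<Sum>l = 0..<?N. ?c $$ (i,l) * y l)"
    by (rule sum_distrib_left[symmetric])
  finally have "(g *\<^sub>v x) $ i = ?s i * (\<Sum>l = 0..<?N. ?c $$ (i,l) * y l)" .
  moreover have "(\<Sum>l = 0..<?N. ?c $$ (i,l) * y l) \<in> intO v"
    using integral i y unfolding integral_mat_def by (intro intO_sum intO_mult) auto
  ultimately show "\<exists>y\<in>intO v. (g *\<^sub>v x) $ i = ?s i * y" by blast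
qed

end

lemma image_mult_mat_vec_eq_iff:
  fixes g h :: "'a::semiring_1 mat"
  assumes g: "g \<in> carrier_mat N N" and h: "h \<in> carrier_mat N N"
    and gh: "g * h = 1\<^sub>m N" and hg: "h * g = 1\<^sub>m N" and L: "L \<subseteq> carrier_vec N"
  shows "(\<lambda>x. g *\<^sub>v x) ` L = L \<longleftrightarrow> (\<forall>x\<in>L. g *\<^sub>v x \<in> L) \<and> (\<forall>x\<in>L. h *\<^sub>v x \<in> L)"
proof -
  have hgx: "h *\<^sub>v (g *\<^sub>v x) = x" and ghx: "g *\<^sub>v (h *\<^sub>v x) = x" if "x \<in> L" for x
    using that L g h gh hg by (auto simp flip: assoc_mult_mat_vec)
  show ?thesis
  proof
    assume "(\<lambda>x. g *\<^sub>v x) ` L = L"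
    then show "(\<forall>x\<in>L. g *\<^sub>v x \<in> L) \<and> (\<forall>x\<in>L. h *\<^sub>v x \<in> L)"
      using hgx by (metis image_eqI image_iff)
  next
    assume "(\<forall>x\<in>L. g *\<^sub>v x \<in> L) \<and> (\<forall>x\<in>L. h *\<^sub>v x \<in> L)"
    then show "(\<lambda>x. g *\<^sub>v x) ` L = L"
      using ghx by (metis (no_types, lifting) image_eqI image_subsetI subset_antisym subsetI)
  qed
qed

lemma paramodular_iff_integral:
  fixes v :: "'a::field_char_0 \<Rightarrow> int"
  assumes v: "valuation v" and w: "w \<noteq> 0" and g: "g \<in> SO m"
    and h: "h \<in> carrier_mat (2*m+1) (2*m+1)"
    and gh: "g * h = 1\<^sub>m (2*m+1)" and hg: "h * g = 1\<^sub>m (2*m+1)"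
  shows "g \<in> paramodular v w m \<longleftrightarrow>
    integral_mat v (latt_coords w m g) \<and> integral_mat v (latt_coords w m h)"
proof -
  have gc: "g \<in> carrier_mat (2*m+1) (2*m+1)" using g unfolding SO_def by auto
  have "latt v w m \<subseteq> carrier_vec (2*m+1)" unfolding latt_def by auto
  note image = image_mult_mat_vec_eq_iff[OF gc h gh hg this]
  have "(\<forall>x\<in>latt v w m. f *\<^sub>v x \<in> latt v w m) \<longleftrightarrow> integral_mat v (latt_coords w m f)"
    if "f \<in> carrier_mat (2*m+1) (2*m+1)" for f
    using valuation.integral_latt_coords_if_stable[OF v w that]
      valuation.stable_if_integral_latt_coords[OF v w that] by blast
  moreover have "g \<in> paramodular v w m \<longleftrightarrow> (\<lambda>x. g *\<^sub>v x) ` latt v w m = latt v w m"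
    using g unfolding paramodular_def by simp
  ultimately show ?thesis
    unfolding image using gc h by simp
qed

section \<open>Levi blocks in the paramodular group\<close>

lemma latt_coords_blockdiag3:
  fixes C :: "'a::field mat"
  assumes w: "w \<noteq> 0" and C: "C \<in> carrier_mat k k" and X: "X \<in> carrier_mat (2*m+1) (2*m+1)"
    and T: "T \<in> carrier_mat k k"
  shows "latt_coords w (k + m) (blockdiag3 C X T) = blockdiag3 C (latt_coords w m X) T"
proof (rule eq_matI)
  have lX: "latt_coords w m X \<in> carrier_mat (2*m+1) (2*m+1)" by (rule carrier_matI) (simp_all add: latt_coords_def)
  fix i j assume "i < dim_row (blockdiag3 C (latt_coords w m X) T)" "j < dim_col (blockdiag3 C (latt_coords w m X) T)"
  then have i: "i < k + ((2*m+1) + k)" and j: "j < k + ((2*m+1) + k)" using C lX T by auto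
  show "latt_coords w (k + m) (blockdiag3 C X T) $$ (i, j) = blockdiag3 C (latt_coords w m X) T $$ (i, j)"
    unfolding index_blockdiag3[OF C lX T i j]
    using i j w
    by (cases "i < k"; cases "j < k"; cases "i < k + (2*m+1)"; cases "j < k + (2*m+1)")
       (auto simp: latt_coords_def index_blockdiag3[OF C X T i j])
qed (use C T in \<open>auto simp: latt_coords_def\<close>)

lemma mat_delete_blockdiag3:
  fixes C :: "'a::zero mat"
  assumes C: "C \<in> carrier_mat k k" and Y: "Y \<in> carrier_mat (2*m+1) (2*m+1)"
    and T: "T \<in> carrier_mat k k"
  shows "mat_delete (blockdiag3 C Y T) (k + m) (k + m) = blockdiag3 C (mat_delete Y m m) T"
proof (rule eq_matI)
  have Y': "mat_delete Y m m \<in> carrier_mat (2*m) (2*m)" using Y by (intro carrier_matI) simp_all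
  fix i j assume "i < dim_row (blockdiag3 C (mat_delete Y m m) T)" "j < dim_col (blockdiag3 C (mat_delete Y m m) T)"
  then have i: "i < k + (2*m + k)" and j: "j < k + (2*m + k)" using C Y' T by auto
  define i' where "i' = (if i < k + m then i else Suc i)"
  define j' where "j' = (if j < k + m then j else Suc j)"
  have i': "i' < k + ((2*m+1) + k)" and j': "j' < k + ((2*m+1) + k)"
    using i j unfolding i'_def j'_def by auto
  have "mat_delete (blockdiag3 C Y T) (k + m) (k + m) $$ (i, j) = blockdiag3 C Y T $$ (i', j')"
    using i j C Y T by (simp add: mat_delete_def i'_def j'_def)
  then show "mat_delete (blockdiag3 C Y T) (k + m) (k + m) $$ (i, j) = blockdiag3 C (mat_delete Y m m) T $$ (i, j)"
    unfolding index_blockdiag3[OF C Y' T i j] index_blockdiag3[OF C Y T i' j']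
    using i j Y
    by (cases "i < k"; cases "j < k"; cases "i < k + 2*m"; cases "j < k + 2*m")
       (auto simp: mat_delete_def i'_def j'_def Suc_diff_le)
qed (use C Y T in auto)

lemma (in residue_reduction) gbar_blockdiag3:
  assumes w: "w \<noteq> 0" and C: "C \<in> carrier_mat k k" and X: "X \<in> carrier_mat (2*m+1) (2*m+1)"
    and T: "T \<in> carrier_mat k k"
  shows "gbar red w (k + m) (blockdiag3 C X T) =
    blockdiag3 (map_mat red C) (gbar red w m X) (map_mat red T)"
proof -
  have Y: "mat_delete (latt_coords w m X) m m \<in> carrier_mat (2*m) (2*m)" by (simp add: carrier_matI)
  show ?thesis
    unfolding gbar_def latt_coords_blockdiag3[OF w C X T] mat_delete_blockdiag3[OF C latt_coords_carrier T]
    by (rule map_mat_blockdiag3[where f = red, OF C Y T red_zero])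
qed

definition alpha_trivial :: "('a::field \<Rightarrow> 'k::field) \<Rightarrow> 'a \<Rightarrow> nat \<Rightarrow> 'a mat \<Rightarrow> bool" where
  "alpha_trivial red w m g \<longleftrightarrow>
    (if (2::'k) \<noteq> 0 then det (gbar red w m g) = 1
     else even (vec_space.rank (2*m) (gbar red w m g - 1\<^sub>m (2*m))))"

lemma paramodular_plus_eq_alpha_trivial:
  "paramodular_plus v w red m = {g \<in> paramodular v w m. alpha_trivial red w m g}"
  unfolding paramodular_plus_def alpha_trivial_def ..

lemma (in residue_reduction) alpha_trivial_blockdiag3_tau_inverse:
  assumes w: "w \<noteq> 0" and C: "C \<in> carrier_mat k k" and C': "C' \<in> carrier_mat k k"
    and CC': "C * C' = 1\<^sub>m k" and C'C: "C' * C = 1\<^sub>m k"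
    and int_C: "integral_mat v C" and int_C': "integral_mat v C'"
    and X: "X \<in> carrier_mat (2*m+1) (2*m+1)"
  shows "alpha_trivial red w (k + m) (blockdiag3 C X (tau C')) \<longleftrightarrow> alpha_trivial red w m X"
proof -
  let ?rC = "map_mat red C" and ?rC' = "map_mat red C'" and ?G = "gbar red w m X"
  have rC: "?rC \<in> carrier_mat k k" and rC': "?rC' \<in> carrier_mat k k" using C C' by auto
  have G: "?G \<in> carrier_mat (2*m) (2*m)" unfolding gbar_def by (simp add: carrier_matI)
  have gbar: "gbar red w (k + m) (blockdiag3 C X (tau C')) = blockdiag3 ?rC ?G (tau ?rC')"
    unfolding gbar_blockdiag3[OF w C X tau_carrier[OF C']] map_mat_tau[OF C'] ..
  have r1: "?rC * ?rC' = 1\<^sub>m k"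
    using map_mat_red_mult[OF C C' int_C int_C'] CC' map_mat_red_one by simp
  have r2: "?rC' * ?rC = 1\<^sub>m k"
    using map_mat_red_mult[OF C' C int_C' int_C] C'C map_mat_red_one by simp
  have "2 * (k + m) = k + (2*m + k)" by simp
  then have "vec_space.rank (2 * (k + m)) (blockdiag3 ?rC ?G (tau ?rC') - 1\<^sub>m (2 * (k + m))) =
      2 * vec_space.rank k (?rC - 1\<^sub>m k) + vec_space.rank (2*m) (?G - 1\<^sub>m (2*m))"
    using rank_blockdiag3_tau_inverse_minus_one[OF rC rC' r1 r2 G] by simp
  then show ?thesis
    unfolding alpha_trivial_def gbar det_blockdiag3_tau_inverse[OF rC rC' r2 G] by simp
qed

lemma blockdiag3_tau_inverse_mem_paramodular_iff:
  fixes v :: "'a::field_char_0 \<Rightarrow> int"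
  assumes v: "valuation v" and w: "w \<noteq> 0" and C: "C \<in> carrier_mat k k" and C': "C' \<in> carrier_mat k k"
    and CC': "C * C' = 1\<^sub>m k" and C'C: "C' * C = 1\<^sub>m k" and X: "X \<in> SO m"
  shows "blockdiag3 C X (tau C') \<in> paramodular v w (k + m) \<longleftrightarrow>
    (integral_mat v C \<and> integral_mat v C') \<and> X \<in> paramodular v w m"
proof -
  let ?X' = "mat_inv X" and ?N = "2 * (k + m) + 1"
  let ?g = "blockdiag3 C X (tau C')" and ?h = "blockdiag3 C' ?X' (tau C)"
  have Xc: "X \<in> carrier_mat (2*m+1) (2*m+1)" using X unfolding SO_def by auto
  have X': "?X' \<in> carrier_mat (2*m+1) (2*m+1)" and XX': "X * ?X' = 1\<^sub>m (2*m+1)"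
    and X'X: "?X' * X = 1\<^sub>m (2*m+1)" using mat_inv_inverse[OF Xc SO_invertible[OF X]] by auto
  have N: "?N = k + ((2*m+1) + k)" by simp
  have g: "?g \<in> SO (k + m)" by (rule blockdiag3_tau_inverse_mem_SO[OF C C' C'C X])
  have h: "?h \<in> carrier_mat ?N ?N"
    unfolding N by (rule blockdiag3_carrier[OF C' X' tau_carrier[OF C]])
  have tau_inv: "tau C' * tau C = 1\<^sub>m k" "tau C * tau C' = 1\<^sub>m k"
    by (simp_all add: tau_mult[OF C C', symmetric] tau_mult[OF C' C, symmetric] CC' C'C tau_one)
  have gh: "?g * ?h = 1\<^sub>m ?N" and hg: "?h * ?g = 1\<^sub>m ?N"
    unfolding N one_mat_blockdiag3
    by (simp_all add: mult_blockdiag3[OF C Xc tau_carrier[OF C'] C' X' tau_carrier[OF C]]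
        mult_blockdiag3[OF C' X' tau_carrier[OF C] C Xc tau_carrier[OF C']] CC' C'C XX' X'X tau_inv)
  show ?thesis
    unfolding paramodular_iff_integral[OF v w g h gh hg] paramodular_iff_integral[OF v w X X' XX' X'X]
      latt_coords_blockdiag3[OF w C Xc tau_carrier[OF C']] latt_coords_blockdiag3[OF w C' X' tau_carrier[OF C]]
      integral_mat_blockdiag3[OF C latt_coords_carrier tau_carrier[OF C']]
      integral_mat_blockdiag3[OF C' latt_coords_carrier tau_carrier[OF C]]
      integral_mat_tau[OF C'] integral_mat_tau[OF C]
    by blast
qed

lemma blockdiag3_mem_paramodular_plus_iff:
  fixes v :: "'a::field_char_0 \<Rightarrow> int" and red :: "'a \<Rightarrow> 'k::field"
  assumes vr: "residue_reduction v red" and w: "w \<noteq> 0" and C: "C \<in> GL_F k" and X: "X \<in> SO m"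
  shows "blockdiag3 C X (tau (mat_inv C)) \<in> paramodular_plus v w red (k + m) \<longleftrightarrow>
    C \<in> GL_O v k \<and> X \<in> paramodular_plus v w red m"
proof -
  interpret residue_reduction v red by (rule vr)
  have v: "valuation v" using vr unfolding residue_reduction_def by blast
  have Cc: "C \<in> carrier_mat k k" using C unfolding GL_F_def by auto
  have C': "mat_inv C \<in> carrier_mat k k" and CC': "C * mat_inv C = 1\<^sub>m k"
    and C'C: "mat_inv C * C = 1\<^sub>m k"
    using mat_inv_inverse[OF Cc] C unfolding GL_F_def by auto
  have Xc: "X \<in> carrier_mat (2*m+1) (2*m+1)" using X unfolding SO_def by auto
  have "C \<in> GL_O v k \<longleftrightarrow> integral_mat v C \<and> integral_mat v (mat_inv C)"
    using C Cc C' unfolding GL_O_def integral_mat_def by auto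
  then show ?thesis
    unfolding paramodular_plus_eq_alpha_trivial mem_Collect_eq
      blockdiag3_tau_inverse_mem_paramodular_iff[OF v w Cc C' CC' C'C X]
    using alpha_trivial_blockdiag3_tau_inverse[OF w Cc C' CC' C'C _ _ Xc] by blast
qed

lemma levi_embed_mem_SO:
  assumes "list_all2 (\<lambda>C ni. C \<in> GL_F ni) Cs ns" and D: "D \<in> SO nt"
  shows "levi_embed Cs D \<in> SO (sum_list ns + nt)"
  using assms(1)
proof (induction rule: list_all2_induct)
  case Nil
  then show ?case using D by simp
next
  case (Cons C Cs ni ns)
  then have C: "C \<in> carrier_mat ni ni" and "invertible_mat C" unfolding GL_F_def by auto
  with mat_inv_inverse[OF C] Cons.IH show ?case
    using blockdiag3_tau_inverse_mem_SO[OF C] by (simp add: add.assoc)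
qed

lemma levi_embed_mem_paramodular_plus_iff:
  fixes v :: "'a::field_char_0 \<Rightarrow> int" and red :: "'a \<Rightarrow> 'k::field"
  assumes vr: "residue_reduction v red" and w: "w \<noteq> 0"
    and "list_all2 (\<lambda>C ni. C \<in> GL_F ni) Cs ns" and D: "D \<in> SO nt"
  shows "levi_embed Cs D \<in> paramodular_plus v w red (sum_list ns + nt) \<longleftrightarrow>
    list_all2 (\<lambda>C ni. C \<in> GL_O v ni) Cs ns \<and> D \<in> paramodular_plus v w red nt"
  using assms(3)
proof (induction rule: list_all2_induct)
  case (Cons C Cs ni ns)
  have "levi_embed Cs D \<in> SO (sum_list ns + nt)" by (rule levi_embed_mem_SO[OF Cons.hyps(2) D])
  with blockdiag3_mem_paramodular_plus_iff[OF vr w Cons.hyps(1)] Cons.IH show ?case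
    by (simp add: add.assoc)
qed simp

theorem proposition3p5p3:
  fixes v :: "'a::field_char_0 \<Rightarrow> int" and red :: "'a \<Rightarrow> 'k::field" and w :: 'a
    and ns :: "nat list" and nt n :: nat
  assumes "nonarch_local_field v red"
    and "w \<noteq> 0" and "v w = 1"
    and "\<forall>ni\<in>set ns. 1 \<le> ni"
    and "n = sum_list ns + nt"
  shows "levi ns nt \<inter> paramodular_plus v w red n =
         {levi_embed Cs D | Cs D. list_all2 (\<lambda>C ni. C \<in> GL_O v ni) Cs ns
                                 \<and> D \<in> paramodular_plus v w red nt}"
proof -
  have vr: "residue_reduction v red" by (rule nonarch_local_field_residue_reduction[OF assms(1)])
  note iff = levi_embed_mem_paramodular_plus_iff[OF vr assms(2)]
  have GL: "list_all2 (\<lambda>C ni. C \<in> GL_F ni) Cs ns" if "list_all2 (\<lambda>C ni. C \<in> GL_O v ni) Cs ns" for Cs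
    using that by (rule list_all2_mono) (simp add: GL_O_def)
  have SO: "D \<in> SO nt" if "D \<in> paramodular_plus v w red nt" for D
    using that unfolding paramodular_plus_def paramodular_def by auto
  show ?thesis
    unfolding levi_def assms(5) using iff GL SO by blast
qed

end
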